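(* Let $p_\beta$ be a probability distribution on $\mathbb{R}$ with finite second moment such that $\mathbb{P}(B\neq0)\neq0$ for $B\sim p_\beta$. For $\sigma>0$ and $\tau\ge0$ let \[ R_B(\sigma,\tau;p_\beta)=\mathbb{E}\big[(\eta(B+\sigma W;\tau)-B)^2\big], \] where $B\sim p_\beta$ and $W\sim N(0,1)$ are independent and $\eta(a;\tau)=(|a|-\tau)_+\mathrm{sign}(a)$. Then $\sigma\mapsto\inf_{\tau} R_{B} (\sigma, \tau; p_\beta)$ is an increasing function of $\sigma$. *)

theory Defs
  imports "HOL-Probability.Probability"
begin

definition soft_thresh :: "real \<Rightarrow> real \<Rightarrow> real" where
  "soft_thresh a \<tau> = max (\<bar>a\<bar> - \<tau>) 0 * sgn a"

definition std_normal :: "real measure" where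
  "std_normal = density lborel std_normal_density"

definition risk :: "real measure \<Rightarrow> real \<Rightarrow> real \<Rightarrow> real" where
  "risk p \<sigma> \<tau> =
     (\<integral>bw. (soft_thresh (fst bw + \<sigma> * snd bw) \<tau> - fst bw)\<^sup>2 \<partial>(p \<Otimes>\<^sub>M std_normal))"

end

theory Submission
  imports Defs "HOL-Real_Asymp.Real_Asymp"
begin

text \<open>
  For a fixed signal value \<open>b\<close> the Gaussian average \<open>E (\<eta>(b + \<sigma> W; \<tau>) - b)\<^sup>2\<close> has a closed
  form in the normal density \<open>\<phi>\<close> and its upper tail \<open>Q\<close>. Along a ray \<open>\<tau> = \<alpha> \<sigma>\<close> its
  derivative in \<open>\<sigma>\<close> is \<open>2 \<sigma>\<close> times a quantity bounded below by a Gaussian tail, uniformly for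
  \<open>\<alpha>\<close> and \<open>b / \<sigma>\<close> in bounded sets. Averaging over \<open>B\<close>, for \<open>\<sigma>\<^sub>1 < \<sigma>\<^sub>2\<close> the risk at
  \<open>\<sigma>\<^sub>2\<close> exceeds the infimum at \<open>\<sigma>\<^sub>1\<close> by a fixed \<open>\<delta> > 0\<close> on every bounded range of
  thresholds. Large thresholds do not matter at \<open>\<sigma>\<^sub>2\<close>: as \<open>\<tau> \<rightarrow> \<infinity>\<close> the risk tends to
  \<open>E B\<^sup>2\<close>, whereas, because \<open>B \<noteq> 0\<close> with positive probability, the Mills ratio asymptotics of
  \<open>Q\<close> give a finite threshold with risk strictly below \<open>E B\<^sup>2\<close>.
\<close>

section \<open>Tail integrals on the real line\<close>

lemma integrable_indicator_mult:
  fixes g :: "real \<Rightarrow> real"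
  assumes "integrable lborel g" and "A \<in> sets borel"
  shows "integrable lborel (\<lambda>x. indicator A x * g x)"
  using integrable_mult_indicator[of A lborel g] assms by simp

lemma integral_split_at:
  fixes g :: "real \<Rightarrow> real"
  assumes "integrable lborel g"
  shows "(\<integral>x. g x \<partial>lborel) =
         (\<integral>x. indicator {..s} x * g x \<partial>lborel) + (\<integral>x. indicator {s<..} x * g x \<partial>lborel)"
proof -
  have "(\<integral>x. g x \<partial>lborel) = (\<integral>x. indicator {..s} x * g x + indicator {s<..} x * g x \<partial>lborel)"
    by (intro Bochner_Integration.integral_cong) (auto split: split_indicator)
  also have "\<dots> = (\<integral>x. indicator {..s} x * g x \<partial>lborel) + (\<integral>x. indicator {s<..} x * g x \<partial>lborel)"
    by (intro Bochner_Integration.integral_add integrable_indicator_mult assms) auto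
  finally show ?thesis .
qed

lemma tail_integral_split:
  fixes g :: "real \<Rightarrow> real"
  assumes "integrable lborel g" and "a \<le> s"
  shows "(\<integral>x. indicator {s<..} x * g x \<partial>lborel) =
         (\<integral>x. indicator {a..} x * g x \<partial>lborel) - (\<integral>x. indicator {a..s} x * g x \<partial>lborel)"
proof -
  have "(\<integral>x. indicator {a..} x * g x \<partial>lborel) =
        (\<integral>x. indicator {a..s} x * g x + indicator {s<..} x * g x \<partial>lborel)"
    using assms(2) by (intro Bochner_Integration.integral_cong) (auto split: split_indicator)
  also have "\<dots> = (\<integral>x. indicator {a..s} x * g x \<partial>lborel) + (\<integral>x. indicator {s<..} x * g x \<partial>lborel)"
    by (intro Bochner_Integration.integral_add integrable_indicator_mult assms(1)) auto
  finally show ?thesis by simp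
qed

lemma tail_integral_has_real_derivative:
  fixes g :: "real \<Rightarrow> real"
  assumes cont: "continuous_on UNIV g" and int: "integrable lborel g"
  shows "((\<lambda>s. \<integral>x. indicator {s<..} x * g x \<partial>lborel) has_real_derivative - g t) (at t)"
proof -
  define a where "a = t - 1"
  define V where "V s = (\<integral>x. indicator {a..} x * g x \<partial>lborel) - integral {a..s} g" for s
  have tail_eq: "(\<integral>x. indicator {s<..} x * g x \<partial>lborel) = V s" if "s \<in> {a<..}" for s
  proof -
    have "set_integrable lborel {a..s} g"
      by (rule borel_integrable_atLeastAtMost') (auto intro: continuous_on_subset[OF cont])
    from set_borel_integral_eq_integral(2)[OF this]
    have "(\<integral>x. indicator {a..s} x * g x \<partial>lborel) = integral {a..s} g"
      by (simp add: set_lebesgue_integral_def)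
    then show ?thesis using tail_integral_split[OF int, of a s] that by (simp add: V_def)
  qed
  have "((\<lambda>s. integral {a..s} g) has_real_derivative g t) (at t within {a..t+1})"
    by (rule integral_has_real_derivative) (auto simp: a_def intro: continuous_on_subset[OF cont])
  then have "((\<lambda>s. integral {a..s} g) has_real_derivative g t) (at t)"
    using at_within_Icc_at[of a t "t+1"] by (simp add: a_def)
  then have "(V has_real_derivative - g t) (at t)"
    unfolding V_def by (auto intro!: derivative_eq_intros)
  then show ?thesis
    by (rule has_field_derivative_transform_within_open[where S="{a<..}"])
       (auto simp: a_def tail_eq)
qed

lemma tendsto_tail_integral_at_top:
  fixes g :: "real \<Rightarrow> real"
  assumes "integrable lborel g"
  shows "((\<lambda>s. \<integral>x. indicator {s<..} x * g x \<partial>lborel) \<longlongrightarrow> 0) at_top"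
proof -
  have "((\<lambda>s. \<integral>x. indicator {..s} x *\<^sub>R g x \<partial>lborel) \<longlongrightarrow> \<integral>x. g x \<partial>lborel) at_top"
    by (rule tendsto_integral_at_top[OF sets_lborel assms])
  then have "((\<lambda>s. (\<integral>x. g x \<partial>lborel) - (\<integral>x. indicator {..s} x * g x \<partial>lborel))
              \<longlongrightarrow> (\<integral>x. g x \<partial>lborel) - (\<integral>x. g x \<partial>lborel)) at_top"
    by (intro tendsto_intros) simp
  moreover have "(\<integral>x. g x \<partial>lborel) - (\<integral>x. indicator {..s} x * g x \<partial>lborel) =
                 (\<integral>x. indicator {s<..} x * g x \<partial>lborel)" for s
    using integral_split_at[OF assms, of s] by simp
  ultimately show ?thesis by simp
qed

lemma DERIV_zero_tendsto_zero_imp_zero: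
  fixes f :: "real \<Rightarrow> real"
  assumes "\<And>x. (f has_real_derivative 0) (at x)" and "(f \<longlongrightarrow> 0) at_top"
  shows "f x = 0"
proof -
  have "f y = f x" for y
    using assms(1) DERIV_isconst_all by blast
  then have "f = (\<lambda>_. f x)" by (rule ext)
  then have "((\<lambda>_::real. f x) \<longlongrightarrow> 0) at_top" using assms(2) by metis
  then show ?thesis by (simp add: tendsto_const_iff)
qed

section \<open>The standard normal density and its upper tail\<close>

abbreviation phi :: "real \<Rightarrow> real" where
  "phi \<equiv> std_normal_density"

definition Q :: "real \<Rightarrow> real" where
  "Q t = (\<integral>x. indicator {t<..} x * phi x \<partial>lborel)"

lemma phi_eq: "phi x = exp (- x\<^sup>2 / 2) / sqrt (2 * pi)"
  by (simp add: std_normal_density_def)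

lemma phi_pos: "phi x > 0"
  by (simp add: normal_density_pos)

lemma phi_nonneg: "phi x \<ge> 0"
  using phi_pos less_imp_le by blast

lemma phi_minus: "phi (-x) = phi x"
  by (simp add: phi_eq)

lemma phi_antimono: "0 \<le> x \<Longrightarrow> x \<le> y \<Longrightarrow> phi y \<le> phi x"
  unfolding phi_eq by (auto intro!: divide_right_mono simp: power_mono)

lemma continuous_on_phi: "continuous_on UNIV phi"
  unfolding normal_density_def by (intro continuous_intros) auto

lemma phi_deriv: "(phi has_real_derivative (- t * phi t)) (at t)"
  unfolding phi_eq by (auto intro!: derivative_eq_intros simp: field_simps power2_eq_square)

lemma x_phi_deriv: "((\<lambda>x. x * phi x) has_real_derivative (phi t - t * (t * phi t))) (at t)"
  using phi_deriv[of t] by (auto intro!: derivative_eq_intros)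

lemma phi_tendsto_0: "(phi \<longlongrightarrow> 0) at_top"
  unfolding phi_eq by real_asymp

lemma x_phi_tendsto_0: "((\<lambda>x. x * phi x) \<longlongrightarrow> 0) at_top"
  unfolding phi_eq by real_asymp

lemma integrable_x_phi: "integrable lborel (\<lambda>x. x * phi x)"
  using integrable_std_normal_moment[of 1] by (simp add: mult.commute)

lemma integrable_x2_phi: "integrable lborel (\<lambda>x. x\<^sup>2 * phi x)"
  using integrable_std_normal_moment[of 2] by (simp add: mult.commute)

lemma integral_x_phi: "(\<integral>x. x * phi x \<partial>lborel) = 0"
  using integral_std_normal_moment_odd[of 0] by (simp add: mult.commute)

lemma integral_x2_phi: "(\<integral>x. x\<^sup>2 * phi x \<partial>lborel) = 1"
  using integral_std_normal_moment_even[of 1] by (simp add: mult.commute)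

lemma Q_deriv: "(Q has_real_derivative - phi t) (at t)"
  unfolding Q_def[abs_def] by (rule tail_integral_has_real_derivative[OF continuous_on_phi]) simp

lemma Q_tendsto_0: "(Q \<longlongrightarrow> 0) at_top"
  unfolding Q_def[abs_def] by (rule tendsto_tail_integral_at_top) simp

lemma continuous_on_Q: "continuous_on UNIV Q"
  by (rule continuous_at_imp_continuous_on) (auto intro: DERIV_continuous[OF Q_deriv])

lemma measurable_Q [measurable]: "Q \<in> borel_measurable borel"
  by (rule borel_measurable_continuous_onI[OF continuous_on_Q])

lemma Q_nonneg: "Q t \<ge> 0"
  unfolding Q_def by (rule integral_nonneg_AE) (simp add: phi_nonneg)

lemma Q_le_1: "Q t \<le> 1"
proof -
  have "Q t \<le> (\<integral>x. phi x \<partial>lborel)"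
    unfolding Q_def
    by (rule integral_mono[OF integrable_indicator_mult]) (auto simp: indicator_def phi_nonneg)
  then show ?thesis by simp
qed

lemma abs_1_minus_Q_minus_Q_le: "\<bar>1 - Q s - Q t\<bar> \<le> 1"
  using Q_nonneg[of s] Q_nonneg[of t] Q_le_1[of s] Q_le_1[of t] by linarith

lemma Q_antimono: "s \<le> t \<Longrightarrow> Q t \<le> Q s"
  by (rule DERIV_nonpos_imp_nonincreasing[of s t Q]) (auto intro: Q_deriv simp: phi_nonneg)

lemma Q_pos: "Q t > 0"
proof -
  obtain z where "Q (t+1) - Q t = (t + 1 - t) * (- phi z)"
    using MVT2[of t "t+1" Q "\<lambda>x. - phi x"] Q_deriv by auto
  then show ?thesis using Q_nonneg[of "t+1"] phi_pos[of z] by simp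
qed

lemma tail_integral_x_phi: "(\<integral>x. indicator {t<..} x * (x * phi x) \<partial>lborel) = phi t"
proof -
  let ?f = "\<lambda>t. (\<integral>x. indicator {t<..} x * (x * phi x) \<partial>lborel) - phi t"
  have "?f t = 0"
  proof (rule DERIV_zero_tendsto_zero_imp_zero[where f = ?f])
    have c: "continuous_on UNIV (\<lambda>x. x * phi x)"
      by (intro continuous_intros continuous_on_phi)
    show "(?f has_real_derivative 0) (at s)" for s
      using tail_integral_has_real_derivative[OF c integrable_x_phi, of s] phi_deriv[of s]
      by (auto intro!: derivative_eq_intros)
    show "(?f \<longlongrightarrow> 0) at_top"
      using tendsto_diff[OF tendsto_tail_integral_at_top[OF integrable_x_phi] phi_tendsto_0] by simp
  qed
  then show ?thesis by simp
qed

lemma tail_integral_x2_phi: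
  "(\<integral>x. indicator {t<..} x * (x\<^sup>2 * phi x) \<partial>lborel) = t * phi t + Q t"
proof -
  let ?f = "\<lambda>t. (\<integral>x. indicator {t<..} x * (x\<^sup>2 * phi x) \<partial>lborel) - (t * phi t + Q t)"
  have "?f t = 0"
  proof (rule DERIV_zero_tendsto_zero_imp_zero[where f = ?f])
    fix s
    have c: "continuous_on UNIV (\<lambda>x. x\<^sup>2 * phi x)"
      by (intro continuous_intros continuous_on_phi)
    have "(?f has_real_derivative (- (s\<^sup>2 * phi s) - ((phi s - s * (s * phi s)) + - phi s))) (at s)"
      using tail_integral_has_real_derivative[OF c integrable_x2_phi, of s] x_phi_deriv[of s] Q_deriv[of s]
      by (intro derivative_intros) auto
    then show "(?f has_real_derivative 0) (at s)"
      by (simp add: algebra_simps power2_eq_square)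
  next
    show "(?f \<longlongrightarrow> 0) at_top"
      using tendsto_diff[OF tendsto_tail_integral_at_top[OF integrable_x2_phi]
                            tendsto_add[OF x_phi_tendsto_0 Q_tendsto_0]]
      by simp
  qed
  then show ?thesis by simp
qed

lemma one_minus_Q_le:
  assumes "s < 0"
  shows "1 - Q s \<le> 1 / s\<^sup>2"
proof -
  have "1 - Q s = (\<integral>x. indicator {..s} x * phi x \<partial>lborel)"
    using integral_split_at[of phi s] by (simp add: Q_def)
  also have "\<dots> \<le> (\<integral>x. (1 / s\<^sup>2) * (x\<^sup>2 * phi x) \<partial>lborel)"
  proof (rule integral_mono)
    show "indicator {..s} x * phi x \<le> 1 / s\<^sup>2 * (x\<^sup>2 * phi x)" for x
    proof (cases "x \<le> s")
      case True
      then have "s\<^sup>2 \<le> x\<^sup>2"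
        using power_mono[of "-s" "-x" 2] assms by simp
      then have "1 * phi x \<le> x\<^sup>2 / s\<^sup>2 * phi x"
        using assms by (intro mult_right_mono) (auto simp: phi_nonneg)
      then show ?thesis using True by simp
    qed (simp add: phi_nonneg)
  qed (simp_all add: integrable_indicator_mult integrable_x2_phi)
  also have "\<dots> = 1 / s\<^sup>2"
    using integral_x2_phi by simp
  finally show ?thesis .
qed

lemma Q_minus_tendsto_1: "((\<lambda>t. Q (-t)) \<longlongrightarrow> 1) at_top"
proof -
  have "\<forall>\<^sub>F t in at_top. 1 - 1 / t\<^sup>2 \<le> Q (- t)"
    using eventually_gt_at_top[of "0::real"]
  proof eventually_elim
    fix t :: real assume "0 < t"
    then show "1 - 1 / t\<^sup>2 \<le> Q (- t)" using one_minus_Q_le[of "-t"] by simp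
  qed
  moreover have "\<forall>\<^sub>F t in at_top. Q (- t) \<le> 1"
    by (simp add: Q_le_1)
  moreover have "((\<lambda>t::real. 1 - 1 / t\<^sup>2) \<longlongrightarrow> 1) at_top"
    by real_asymp
  ultimately show ?thesis
    by (rule tendsto_sandwich) simp
qed

lemma Q_minus: "Q (-t) = 1 - Q t"
proof -
  let ?f = "\<lambda>t. Q (-t) + Q t - 1"
  have "?f t = 0"
  proof (rule DERIV_zero_tendsto_zero_imp_zero[where f = ?f])
    fix s
    have "(?f has_real_derivative (- phi (-s) * (-1) + - phi s - 0)) (at s)"
      by (intro derivative_intros DERIV_chain2[OF Q_deriv] Q_deriv)
    then show "(?f has_real_derivative 0) (at s)"
      by (simp add: phi_minus)
  next
    show "(?f \<longlongrightarrow> 0) at_top"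
      using tendsto_diff[OF tendsto_add[OF Q_minus_tendsto_1 Q_tendsto_0] tendsto_const[of 1]]
      by simp
  qed
  then show ?thesis by simp
qed

lemma Q_less_phi_div:
  assumes "t > 0"
  shows "Q t < phi t / t"
proof -
  let ?u = "\<lambda>x. phi x / x - Q x"
  have "0 < ?u t"
  proof (rule DERIV_neg_imp_decreasing_at_top[where f="?u"])
    fix x assume "x \<ge> t"
    then have x: "x > 0" using assms by simp
    have "(?u has_real_derivative (- phi x / x\<^sup>2)) (at x)"
      using x by (auto intro!: derivative_eq_intros phi_deriv Q_deriv simp: field_simps power2_eq_square)
    moreover have "- phi x / x\<^sup>2 < 0"
      using x phi_pos[of x] by simp
    ultimately show "\<exists>y. (?u has_real_derivative y) (at x) \<and> y < 0" by blast
  next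
    have "((\<lambda>x. phi x / x) \<longlongrightarrow> 0) at_top"
      unfolding phi_eq by real_asymp
    then show "(?u \<longlongrightarrow> 0) at_top"
      using tendsto_diff[OF _ Q_tendsto_0] by fastforce
  qed
  then show ?thesis by simp
qed

lemma Q_greater_phi_mult:
  assumes "t > 0"
  shows "phi t * (1 / t - 1 / t ^ 3) < Q t"
proof -
  let ?w = "\<lambda>x. Q x - phi x * (1 / x - 1 / x ^ 3)"
  have "0 < ?w t"
  proof (rule DERIV_neg_imp_decreasing_at_top[where f="?w"])
    fix x assume "x \<ge> t"
    then have x: "x > 0" using assms by simp
    have "(?w has_real_derivative (- 3 * phi x / x ^ 4)) (at x)"
      using x by (auto intro!: derivative_eq_intros phi_deriv Q_deriv simp: field_simps eval_nat_numeral)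
    moreover have "- 3 * phi x / x ^ 4 < 0"
      using x phi_pos[of x] by simp
    ultimately show "\<exists>y. (?w has_real_derivative y) (at x) \<and> y < 0" by blast
  next
    have "((\<lambda>x. phi x * (1 / x - 1 / x ^ 3)) \<longlongrightarrow> 0) at_top"
      unfolding phi_eq by real_asymp
    then show "(?w \<longlongrightarrow> 0) at_top"
      using tendsto_diff[OF Q_tendsto_0] by fastforce
  qed
  then show ?thesis by simp
qed

section \<open>Gaussian integrals of squared affine functions\<close>

definition tail_quad :: "real \<Rightarrow> real \<Rightarrow> real \<Rightarrow> real" where
  "tail_quad a c t = a\<^sup>2 * (t * phi t + Q t) + 2 * a * c * phi t + c\<^sup>2 * Q t"

lemma affine_sq_phi_eq:
  "(a * x + c)\<^sup>2 * phi x = a\<^sup>2 * (x\<^sup>2 * phi x) + 2 * a * c * (x * phi x) + c\<^sup>2 * phi x"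
  by (simp add: power2_eq_square algebra_simps)

lemma integrable_affine_sq_phi: "integrable lborel (\<lambda>x. (a * x + c)\<^sup>2 * phi x)"
  unfolding affine_sq_phi_eq using integrable_x_phi integrable_x2_phi by simp

lemma integral_affine_sq_phi: "(\<integral>x. (a * x + c)\<^sup>2 * phi x \<partial>lborel) = a\<^sup>2 + c\<^sup>2"
  unfolding affine_sq_phi_eq using integrable_x_phi integrable_x2_phi
  by (simp add: integral_x_phi integral_x2_phi)

lemma tail_integral_affine_sq_phi:
  "(\<integral>x. indicator {t<..} x * ((a * x + c)\<^sup>2 * phi x) \<partial>lborel) = tail_quad a c t"
proof -
  let ?I = "indicator {t<..} :: real \<Rightarrow> real"
  have "(\<integral>x. ?I x * ((a * x + c)\<^sup>2 * phi x) \<partial>lborel) =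
        (\<integral>x. a\<^sup>2 * (?I x * (x\<^sup>2 * phi x)) + 2 * a * c * (?I x * (x * phi x)) + c\<^sup>2 * (?I x * phi x) \<partial>lborel)"
    unfolding affine_sq_phi_eq by (simp add: algebra_simps)
  also have "\<dots> = tail_quad a c t"
    using integrable_indicator_mult[OF integrable_x2_phi, of "{t<..}"]
      integrable_indicator_mult[OF integrable_x_phi, of "{t<..}"]
      integrable_indicator_mult[of phi "{t<..}"]
    by (simp add: tail_integral_x_phi tail_integral_x2_phi Q_def tail_quad_def)
  finally show ?thesis .
qed

lemma tail_quad_minus: "tail_quad 1 c (-t) = 1 + c\<^sup>2 - tail_quad 1 (-c) t"
  unfolding tail_quad_def by (simp add: Q_minus phi_minus algebra_simps)

lemma tail_quad_deriv:
  "((\<lambda>t. tail_quad 1 c t) has_real_derivative (- ((t + c)\<^sup>2 * phi t))) (at t)"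
  unfolding tail_quad_def
  by (rule derivative_eq_intros x_phi_deriv Q_deriv phi_deriv refl | simp)+
     (simp add: algebra_simps power2_eq_square)

lemma tail_quad_le: "tail_quad 1 c t \<le> 1 + c\<^sup>2"
proof -
  have "tail_quad 1 c t \<le> (\<integral>x. (1 * x + c)\<^sup>2 * phi x \<partial>lborel)"
    unfolding tail_integral_affine_sq_phi[symmetric]
    by (rule integral_mono[OF integrable_indicator_mult integrable_affine_sq_phi])
       (use integrable_affine_sq_phi[of 1 c] in \<open>auto simp: indicator_def phi_nonneg\<close>)
  then show ?thesis
    using integral_affine_sq_phi[of 1 c] by simp
qed

lemma tail_quad_ge:
  assumes "t \<le> T" "\<alpha> \<le> T"
  shows "Q (T + 1) \<le> tail_quad 1 (-\<alpha>) t"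
  unfolding Q_def tail_integral_affine_sq_phi[symmetric]
proof (rule integral_mono[OF integrable_indicator_mult integrable_indicator_mult])
  fix x
  show "indicator {T + 1<..} x * phi x \<le> indicator {t<..} x * ((1 * x + - \<alpha>)\<^sup>2 * phi x)"
  proof (cases "T + 1 < x")
    case True
    then have "1 \<le> (x - \<alpha>)\<^sup>2"
      using assms by (intro one_le_power) linarith
    then have "1 * phi x \<le> (x - \<alpha>)\<^sup>2 * phi x"
      by (intro mult_right_mono) (auto simp: phi_nonneg)
    then show ?thesis
      using True assms by simp
  qed (simp add: phi_nonneg)
qed (use integrable_affine_sq_phi[of 1 "-\<alpha>"] in simp_all)

lemma tail_quad_diag_less:
  assumes "a > 0"
  shows "tail_quad 1 (-a) a < 2 * phi a / a ^ 3"
proof -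
  let ?v = "\<lambda>x. 2 * phi x / x ^ 3 - ((1 + x\<^sup>2) * Q x - x * phi x)"
  have "0 < ?v a"
  proof (rule DERIV_neg_imp_decreasing_at_top[where f="?v"])
    fix x assume "x \<ge> a"
    then have x: "x > 0" using assms by simp
    have "(?v has_real_derivative (- 2 * phi x / x\<^sup>2 - 6 * phi x / x ^ 4 - 2 * x * Q x + 2 * phi x)) (at x)"
      using x by (auto intro!: derivative_eq_intros phi_deriv Q_deriv x_phi_deriv
                       simp: field_simps eval_nat_numeral)
    moreover have "- 2 * phi x / x\<^sup>2 - 6 * phi x / x ^ 4 - 2 * x * Q x + 2 * phi x < 0"
    proof -
      have "x * (phi x * (1 / x - 1 / x ^ 3)) < x * Q x"
        using Q_greater_phi_mult[OF x] x by simp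
      moreover have "x * (phi x * (1 / x - 1 / x ^ 3)) = phi x - phi x / x\<^sup>2"
        using x by (simp add: field_simps eval_nat_numeral)
      moreover have "0 < 6 * phi x / x ^ 4"
        using x phi_pos[of x] by simp
      ultimately show ?thesis by (simp add: field_simps)
    qed
    ultimately show "\<exists>y. (?v has_real_derivative y) (at x) \<and> y < 0" by blast
  next
    have "((\<lambda>x. (1 + x\<^sup>2) * Q x) \<longlongrightarrow> 0) at_top"
    proof (rule tendsto_sandwich[where f="\<lambda>_. 0" and h="\<lambda>x. (1 + x\<^sup>2) * (phi x / x)"])
      show "\<forall>\<^sub>F x in at_top. (1 + x\<^sup>2) * Q x \<le> (1 + x\<^sup>2) * (phi x / x)"
        using eventually_gt_at_top[of "0::real"]
        by eventually_elim (intro mult_left_mono less_imp_le[OF Q_less_phi_div], auto)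
      show "((\<lambda>x. (1 + x\<^sup>2) * (phi x / x)) \<longlongrightarrow> 0) at_top"
        unfolding phi_eq by real_asymp
    qed (simp_all add: Q_nonneg)
    moreover have "((\<lambda>x. 2 * phi x / x ^ 3) \<longlongrightarrow> 0) at_top"
      unfolding phi_eq by real_asymp
    ultimately show "(?v \<longlongrightarrow> 0) at_top"
      using tendsto_diff[OF _ tendsto_diff[OF _ x_phi_tendsto_0]] by fastforce
  qed
  then show ?thesis
    by (simp add: tail_quad_def algebra_simps power2_eq_square)
qed

section \<open>The risk of soft thresholding at a fixed signal value\<close>

lemma measurable_soft_thresh [measurable]: "(\<lambda>y. soft_thresh y t) \<in> borel_measurable borel"
  unfolding soft_thresh_def by measurable

lemma soft_thresh_between: "\<tau> \<ge> 0 \<Longrightarrow> min 0 y \<le> soft_thresh y \<tau> \<and> soft_thresh y \<tau> \<le> max 0 y"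
  by (auto simp: soft_thresh_def max_def min_def sgn_if)

lemma sq_le_max_sq_of_between:
  fixes u :: real
  assumes "m \<le> u" "u \<le> M"
  shows "u\<^sup>2 \<le> max (m\<^sup>2) (M\<^sup>2)"
proof (cases "u \<ge> 0")
  case True
  then have "u\<^sup>2 \<le> M\<^sup>2" using assms by (intro power_mono) auto
  then show ?thesis by simp
next
  case False
  then have "(-u)\<^sup>2 \<le> (-m)\<^sup>2" using assms by (intro power_mono) auto
  then show ?thesis by simp
qed

lemma soft_thresh_err_sq_le:
  assumes "\<tau> \<ge> 0"
  shows "(soft_thresh (b + z) \<tau> - b)\<^sup>2 \<le> b\<^sup>2 + z\<^sup>2"
proof -
  have "min 0 (b + z) - b \<le> soft_thresh (b + z) \<tau> - b" "soft_thresh (b + z) \<tau> - b \<le> max 0 (b + z) - b"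
    using soft_thresh_between[OF assms] by auto
  then have "(soft_thresh (b + z) \<tau> - b)\<^sup>2 \<le> max ((min 0 (b + z) - b)\<^sup>2) ((max 0 (b + z) - b)\<^sup>2)"
    by (rule sq_le_max_sq_of_between)
  also have "\<dots> \<le> b\<^sup>2 + z\<^sup>2"
    by (auto simp: min_def max_def)
  finally show ?thesis .
qed

text \<open>On the three regions \<open>y \<le> -\<tau>\<close>, \<open>-\<tau> < y \<le> \<tau>\<close>, \<open>\<tau> < y\<close> the error is
  \<open>y - b + \<tau>\<close>, \<open>-b\<close> and \<open>y - b - \<tau>\<close>; the identity writes it with indicators of the two half lines.\<close>

lemma soft_thresh_err_sq_split:
  assumes "\<tau> \<ge> 0"
  shows "(soft_thresh y \<tau> - b)\<^sup>2 = (y - b + \<tau>)\<^sup>2 + (if \<tau> < y then (y - b - \<tau>)\<^sup>2 - b\<^sup>2 else 0)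
           - (if -\<tau> < y then (y - b + \<tau>)\<^sup>2 - b\<^sup>2 else 0)"
proof (cases "\<tau> < y")
  case True
  then show ?thesis using assms by (auto simp: soft_thresh_def sgn_if abs_if max_def algebra_simps)
next
  case False
  show ?thesis
  proof (cases "-\<tau> < y")
    case True
    then have "soft_thresh y \<tau> = 0" using False by (auto simp: soft_thresh_def abs_if max_def)
    then show ?thesis using True False by simp
  next
    case False': False
    then have "soft_thresh y \<tau> = y + \<tau>" using False assms
      by (auto simp: soft_thresh_def abs_if max_def sgn_if)
    then show ?thesis using False False' by (simp add: algebra_simps)
  qed
qed

text \<open>The closed form of \<open>E (\<eta>(b + \<sigma> W; \<tau>) - b)\<^sup>2\<close> at a fixed signal value \<open>b\<close>.\<close>

definition point_risk :: "real \<Rightarrow> real \<Rightarrow> real \<Rightarrow> real" where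
  "point_risk \<sigma> \<tau> b = \<sigma>\<^sup>2 + \<tau>\<^sup>2 + tail_quad \<sigma> (-\<tau>) ((\<tau> - b) / \<sigma>) - b\<^sup>2 * Q ((\<tau> - b) / \<sigma>)
      - tail_quad \<sigma> \<tau> ((-\<tau> - b) / \<sigma>) + b\<^sup>2 * Q ((-\<tau> - b) / \<sigma>)"

lemma measurable_point_risk [measurable]: "point_risk \<sigma> \<tau> \<in> borel_measurable borel"
  unfolding point_risk_def tail_quad_def by measurable

lemma prob_space_std_normal: "prob_space std_normal"
  unfolding std_normal_def by (rule prob_space_normal_density) simp

lemma sets_std_normal [simp, measurable_cong]: "sets std_normal = sets borel"
  unfolding std_normal_def by simp

lemma integrable_std_normal_iff:
  "f \<in> borel_measurable borel \<Longrightarrow> integrable std_normal f \<longleftrightarrow> integrable lborel (\<lambda>w. phi w * f w)"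
  unfolding std_normal_def by (subst integrable_density) auto

lemma integral_std_normal:
  "f \<in> borel_measurable borel \<Longrightarrow> (\<integral>w. f w \<partial>std_normal) = (\<integral>w. phi w * f w \<partial>lborel)"
  unfolding std_normal_def by (subst integral_density) auto

lemma integrable_std_normal_sq: "integrable std_normal (\<lambda>w. w\<^sup>2)"
  using integrable_x2_phi by (subst integrable_std_normal_iff) (simp_all add: mult.commute)

lemma integral_std_normal_sq: "(\<integral>w. w\<^sup>2 \<partial>std_normal) = 1"
  using integral_x2_phi by (subst integral_std_normal) (simp_all add: mult.commute)

lemma integrable_std_normal_soft_thresh_err:
  assumes "\<tau> \<ge> 0"
  shows "integrable std_normal (\<lambda>w. (soft_thresh (b + \<sigma> * w) \<tau> - b)\<^sup>2)"
proof (rule Bochner_Integration.integrable_bound)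
  interpret N: prob_space std_normal by (rule prob_space_std_normal)
  show "integrable std_normal (\<lambda>w. b\<^sup>2 + \<sigma>\<^sup>2 * w\<^sup>2)"
    using integrable_std_normal_sq by auto
  show "(\<lambda>w. (soft_thresh (b + \<sigma> * w) \<tau> - b)\<^sup>2) \<in> borel_measurable std_normal"
    by measurable
  show "AE w in std_normal. norm ((soft_thresh (b + \<sigma> * w) \<tau> - b)\<^sup>2) \<le> norm (b\<^sup>2 + \<sigma>\<^sup>2 * w\<^sup>2)"
    using soft_thresh_err_sq_le[OF assms, of b "\<sigma> * w" for w] by (simp add: power_mult_distrib)
qed

lemma integral_std_normal_soft_thresh_err:
  assumes s: "\<sigma> > 0" and t: "\<tau> \<ge> 0"
  shows "(\<integral>w. (soft_thresh (b + \<sigma> * w) \<tau> - b)\<^sup>2 \<partial>std_normal) = point_risk \<sigma> \<tau> b"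
proof -
  define t1 where "t1 = (\<tau> - b) / \<sigma>"
  define t3 where "t3 = (-\<tau> - b) / \<sigma>"
  have c1: "(\<tau> < b + \<sigma> * w) = (w \<in> {t1<..})" for w
    using s by (auto simp: t1_def pos_divide_less_eq algebra_simps)
  have c3: "(-\<tau> < b + \<sigma> * w) = (w \<in> {t3<..})" for w
    using s by (auto simp: t3_def pos_divide_less_eq algebra_simps)
  have split: "phi w * (soft_thresh (b + \<sigma> * w) \<tau> - b)\<^sup>2 =
      (\<sigma> * w + \<tau>)\<^sup>2 * phi w
      + indicator {t1<..} w * ((\<sigma> * w - \<tau>)\<^sup>2 * phi w) - b\<^sup>2 * (indicator {t1<..} w * phi w)
      - indicator {t3<..} w * ((\<sigma> * w + \<tau>)\<^sup>2 * phi w) + b\<^sup>2 * (indicator {t3<..} w * phi w)" for w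
    unfolding soft_thresh_err_sq_split[OF t, of "b + \<sigma> * w" b] c1 c3
    by (auto simp: indicator_def algebra_simps)
  have tail_t1: "(\<integral>w. indicator {t1<..} w * ((\<sigma> * w - \<tau>)\<^sup>2 * phi w) \<partial>lborel) =
                 tail_quad \<sigma> (-\<tau>) t1"
    using tail_integral_affine_sq_phi[of t1 \<sigma> "-\<tau>"] by simp
  have "(\<integral>w. (soft_thresh (b + \<sigma> * w) \<tau> - b)\<^sup>2 \<partial>std_normal) =
        (\<integral>w. phi w * (soft_thresh (b + \<sigma> * w) \<tau> - b)\<^sup>2 \<partial>lborel)"
    by (rule integral_std_normal) measurable
  also have "\<dots> = (\<sigma>\<^sup>2 + \<tau>\<^sup>2) + tail_quad \<sigma> (-\<tau>) t1 - b\<^sup>2 * Q t1 - tail_quad \<sigma> \<tau> t3 + b\<^sup>2 * Q t3"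
    unfolding split
    using integrable_affine_sq_phi[of \<sigma> \<tau>]
      integrable_indicator_mult[OF integrable_affine_sq_phi, of "{t1<..}" \<sigma> "-\<tau>"]
      integrable_indicator_mult[OF integrable_affine_sq_phi, of "{t3<..}" \<sigma> \<tau>]
      integrable_indicator_mult[of phi "{t1<..}"] integrable_indicator_mult[of phi "{t3<..}"]
    by (simp add: integral_affine_sq_phi tail_integral_affine_sq_phi tail_t1 Q_def[symmetric])
  finally show ?thesis
    by (simp add: point_risk_def t1_def t3_def)
qed

lemma point_risk_nonneg: "\<sigma> > 0 \<Longrightarrow> \<tau> \<ge> 0 \<Longrightarrow> point_risk \<sigma> \<tau> b \<ge> 0"
  by (subst integral_std_normal_soft_thresh_err[symmetric]) auto

lemma point_risk_le:
  assumes s: "\<sigma> > 0" and t: "\<tau> \<ge> 0"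
  shows "point_risk \<sigma> \<tau> b \<le> b\<^sup>2 + \<sigma>\<^sup>2"
proof -
  interpret N: prob_space std_normal by (rule prob_space_std_normal)
  have "point_risk \<sigma> \<tau> b \<le> (\<integral>w. b\<^sup>2 + \<sigma>\<^sup>2 * w\<^sup>2 \<partial>std_normal)"
    unfolding integral_std_normal_soft_thresh_err[OF s t, symmetric]
    using soft_thresh_err_sq_le[OF t, of b "\<sigma> * w" for w] integrable_std_normal_sq
    by (intro integral_mono integrable_std_normal_soft_thresh_err t)
       (auto simp: power_mult_distrib)
  also have "\<dots> = b\<^sup>2 + \<sigma>\<^sup>2"
    using integrable_std_normal_sq by (simp add: integral_std_normal_sq N.prob_space)
  finally show ?thesis .
qed

section \<open>Scaling in the noise level\<close>

lemma point_risk_1_eq: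
  "point_risk 1 \<alpha> \<mu> = 1 + \<alpha>\<^sup>2 + tail_quad 1 (-\<alpha>) (\<alpha> - \<mu>) - \<mu>\<^sup>2 * Q (\<alpha> - \<mu>)
     - tail_quad 1 \<alpha> (-\<alpha> - \<mu>) + \<mu>\<^sup>2 * Q (-\<alpha> - \<mu>)"
  by (simp add: point_risk_def)

lemma point_risk_scale:
  assumes "\<sigma> > 0"
  shows "point_risk \<sigma> (\<alpha> * \<sigma>) b = \<sigma>\<^sup>2 * point_risk 1 \<alpha> (b / \<sigma>)"
proof -
  have "(\<alpha> * \<sigma> - b) / \<sigma> = \<alpha> - b / \<sigma>" "(- (\<alpha> * \<sigma>) - b) / \<sigma> = - \<alpha> - b / \<sigma>"
    using assms by (simp_all add: field_simps)
  then show ?thesis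
    using assms unfolding point_risk_def tail_quad_def
    by (simp add: field_simps power2_eq_square)
qed

lemma point_risk_1_minus: "point_risk 1 \<alpha> (-\<mu>) = point_risk 1 \<alpha> \<mu>"
proof -
  have t1: "tail_quad 1 (-\<alpha>) (\<alpha> + \<mu>) = 1 + \<alpha>\<^sup>2 - tail_quad 1 \<alpha> (-\<alpha> - \<mu>)"
    using tail_quad_minus[of "-\<alpha>" "-\<alpha> - \<mu>"] by (simp add: add.commute)
  have t2: "tail_quad 1 \<alpha> (\<mu> - \<alpha>) = 1 + \<alpha>\<^sup>2 - tail_quad 1 (-\<alpha>) (\<alpha> - \<mu>)"
    using tail_quad_minus[of \<alpha> "\<alpha> - \<mu>"] by simp
  have q1: "Q (\<alpha> + \<mu>) = 1 - Q (-\<alpha> - \<mu>)"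
    using Q_minus[of "-\<alpha> - \<mu>"] by (simp add: add.commute)
  have q2: "Q (\<mu> - \<alpha>) = 1 - Q (\<alpha> - \<mu>)"
    using Q_minus[of "\<alpha> - \<mu>"] by simp
  have "point_risk 1 \<alpha> (-\<mu>) = 1 + \<alpha>\<^sup>2 + tail_quad 1 (-\<alpha>) (\<alpha> + \<mu>) - \<mu>\<^sup>2 * Q (\<alpha> + \<mu>)
      - tail_quad 1 \<alpha> (\<mu> - \<alpha>) + \<mu>\<^sup>2 * Q (\<mu> - \<alpha>)"
    unfolding point_risk_1_eq by (simp add: algebra_simps)
  also have "\<dots> = point_risk 1 \<alpha> \<mu>"
    unfolding t1 t2 q1 q2 point_risk_1_eq by (simp add: algebra_simps)
  finally show ?thesis .
qed

lemma point_risk_1_deriv: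
  "((\<lambda>m. point_risk 1 \<alpha> m) has_real_derivative 2 * \<mu> * (Q (-\<alpha> - \<mu>) - Q (\<alpha> - \<mu>))) (at \<mu>)"
proof -
  have dt: "((\<lambda>m. tail_quad 1 d (u - m)) has_real_derivative - ((u - \<mu> + d)\<^sup>2 * phi (u - \<mu>)) * - 1) (at \<mu>)"
    for d u
    by (rule DERIV_chain2[OF tail_quad_deriv]) (auto intro!: derivative_eq_intros)
  have dQ: "((\<lambda>m. Q (u - m)) has_real_derivative - phi (u - \<mu>) * - 1) (at \<mu>)" for u
    by (rule DERIV_chain2[OF Q_deriv]) (auto intro!: derivative_eq_intros)
  have "((\<lambda>m. point_risk 1 \<alpha> m) has_real_derivative
      0 + \<mu>\<^sup>2 * phi (\<alpha> - \<mu>) - (2 * \<mu> * Q (\<alpha> - \<mu>) + \<mu>\<^sup>2 * phi (\<alpha> - \<mu>))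
        - \<mu>\<^sup>2 * phi (-\<alpha> - \<mu>) + (2 * \<mu> * Q (-\<alpha> - \<mu>) + \<mu>\<^sup>2 * phi (-\<alpha> - \<mu>))) (at \<mu>)"
    unfolding point_risk_1_eq
    using dt[of "-\<alpha>" \<alpha>] dt[of \<alpha> "-\<alpha>"] dQ[of \<alpha>] dQ[of "-\<alpha>"]
    by (intro DERIV_add DERIV_diff DERIV_mult DERIV_const) (auto intro!: derivative_eq_intros)
  then show ?thesis
    by (simp add: algebra_simps power2_eq_square)
qed

text \<open>\<open>2 \<sigma> ray_slope (b / \<sigma>) \<alpha>\<close> is the derivative of the risk along the ray \<open>\<tau> = \<alpha> \<sigma>\<close>;
  it is bounded below by a Gaussian tail, which makes the risk strictly increasing along rays.\<close>

definition ray_slope :: "real \<Rightarrow> real \<Rightarrow> real" where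
  "ray_slope \<mu> \<alpha> = 1 + \<alpha>\<^sup>2 + tail_quad 1 (-\<alpha>) (\<alpha> - \<mu>) - tail_quad 1 \<alpha> (-\<alpha> - \<mu>)"

lemma point_risk_ray_deriv:
  assumes "s > 0"
  shows "((\<lambda>s. point_risk s (\<alpha> * s) b) has_real_derivative 2 * s * ray_slope (b / s) \<alpha>) (at s)"
proof -
  have "((\<lambda>s. point_risk 1 \<alpha> (b / s)) has_real_derivative
          (2 * (b / s) * (Q (-\<alpha> - b / s) - Q (\<alpha> - b / s))) * (- b / s\<^sup>2)) (at s)"
    by (rule DERIV_chain2[OF point_risk_1_deriv])
       (use assms in \<open>auto intro!: derivative_eq_intros simp: power2_eq_square\<close>)
  then have "((\<lambda>s. s\<^sup>2 * point_risk 1 \<alpha> (b / s)) has_real_derivative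
      2 * s * point_risk 1 \<alpha> (b / s) + s\<^sup>2 * ((2 * (b / s) * (Q (-\<alpha> - b / s) - Q (\<alpha> - b / s))) * (- b / s\<^sup>2))) (at s)"
    by (auto intro!: derivative_eq_intros)
  moreover have "2 * s * point_risk 1 \<alpha> (b / s) + s\<^sup>2 * ((2 * (b / s) * (Q (-\<alpha> - b / s) - Q (\<alpha> - b / s))) * (- b / s\<^sup>2))
     = 2 * s * ray_slope (b / s) \<alpha>"
    using assms unfolding point_risk_1_eq ray_slope_def by (simp add: field_simps power2_eq_square)
  ultimately have "((\<lambda>s. s\<^sup>2 * point_risk 1 \<alpha> (b / s)) has_real_derivative 2 * s * ray_slope (b / s) \<alpha>) (at s)"
    by simp
  then show ?thesis
    by (rule has_field_derivative_transform_within_open[where S="{0<..}"])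
       (use assms in \<open>auto simp: point_risk_scale\<close>)
qed

lemma ray_slope_ge:
  assumes "\<alpha> - \<mu> \<le> T" "\<alpha> \<le> T"
  shows "Q (T + 1) \<le> ray_slope \<mu> \<alpha>"
  using tail_quad_ge[OF assms] tail_quad_le[of \<alpha> "-\<alpha> - \<mu>"] unfolding ray_slope_def by simp

lemma point_risk_ray_gap:
  assumes "0 < \<sigma>\<^sub>1" "\<sigma>\<^sub>1 < \<sigma>\<^sub>2" "\<alpha> \<le> A"
  shows "2 * \<sigma>\<^sub>1 * (\<sigma>\<^sub>2 - \<sigma>\<^sub>1) * Q (A + \<bar>b\<bar> / \<sigma>\<^sub>1 + 1)
           \<le> point_risk \<sigma>\<^sub>2 (\<alpha> * \<sigma>\<^sub>2) b - point_risk \<sigma>\<^sub>1 (\<alpha> * \<sigma>\<^sub>1) b"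
proof -
  obtain z where z: "\<sigma>\<^sub>1 < z" "z < \<sigma>\<^sub>2" and eq:
    "point_risk \<sigma>\<^sub>2 (\<alpha> * \<sigma>\<^sub>2) b - point_risk \<sigma>\<^sub>1 (\<alpha> * \<sigma>\<^sub>1) b = (\<sigma>\<^sub>2 - \<sigma>\<^sub>1) * (2 * z * ray_slope (b / z) \<alpha>)"
    using MVT2[OF assms(2), of "\<lambda>s. point_risk s (\<alpha> * s) b" "\<lambda>s. 2 * s * ray_slope (b / s) \<alpha>"]
      point_risk_ray_deriv assms(1) by force
  have "\<bar>b\<bar> / z \<le> \<bar>b\<bar> / \<sigma>\<^sub>1"
    using z assms(1) by (intro divide_left_mono) auto
  moreover have "- (b / z) \<le> \<bar>b\<bar> / z"
    using z assms(1) by (simp add: divide_le_eq_1 abs_if)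
  ultimately have "Q (A + \<bar>b\<bar> / \<sigma>\<^sub>1 + 1) \<le> ray_slope (b / z) \<alpha>"
    using assms by (intro ray_slope_ge) (auto intro: add_increasing2)
  then have "2 * \<sigma>\<^sub>1 * Q (A + \<bar>b\<bar> / \<sigma>\<^sub>1 + 1) \<le> 2 * z * ray_slope (b / z) \<alpha>"
    using z assms(1) Q_nonneg by (intro mult_mono) auto
  then have "(\<sigma>\<^sub>2 - \<sigma>\<^sub>1) * (2 * \<sigma>\<^sub>1 * Q (A + \<bar>b\<bar> / \<sigma>\<^sub>1 + 1))
               \<le> (\<sigma>\<^sub>2 - \<sigma>\<^sub>1) * (2 * z * ray_slope (b / z) \<alpha>)"
    using assms(2) by (intro mult_left_mono) auto
  then show ?thesis
    unfolding eq by (simp add: algebra_simps)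
qed

text \<open>For large thresholds the risk approaches \<open>b\<^sup>2\<close>, the risk of the zero estimate.\<close>

lemma point_risk_ge:
  assumes "\<sigma> > 0" "\<tau> \<ge> 0"
  shows "b\<^sup>2 * (1 - Q ((\<tau> - b) / \<sigma>) - Q ((\<tau> + b) / \<sigma>)) \<le> point_risk \<sigma> \<tau> b"
proof -
  define \<alpha> where "\<alpha> = \<tau> / \<sigma>"
  define \<mu> where "\<mu> = b / \<sigma>"
  have "point_risk \<sigma> \<tau> b = \<sigma>\<^sup>2 * point_risk 1 \<alpha> \<mu>"
    using point_risk_scale[OF assms(1), of \<alpha> b] assms(1) by (simp add: \<alpha>_def \<mu>_def)
  also have "\<dots> = \<sigma>\<^sup>2 * ray_slope \<mu> \<alpha> + b\<^sup>2 * (1 - Q (\<alpha> + \<mu>) - Q (\<alpha> - \<mu>))"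
  proof -
    have q: "Q (-\<alpha> - \<mu>) = 1 - Q (\<alpha> + \<mu>)"
      using Q_minus[of "\<alpha> + \<mu>"] by simp
    show ?thesis
      using assms(1) unfolding point_risk_1_eq ray_slope_def q
      by (simp add: \<mu>_def power_divide field_simps)
  qed
  finally have "point_risk \<sigma> \<tau> b = \<sigma>\<^sup>2 * ray_slope \<mu> \<alpha> + b\<^sup>2 * (1 - Q (\<alpha> + \<mu>) - Q (\<alpha> - \<mu>))" .
  moreover have "\<alpha> + \<mu> = (\<tau> + b) / \<sigma>" "\<alpha> - \<mu> = (\<tau> - b) / \<sigma>"
    by (simp_all add: \<alpha>_def \<mu>_def add_divide_distrib diff_divide_distrib)
  moreover have "0 \<le> ray_slope \<mu> \<alpha>"
    using ray_slope_ge[of \<alpha> \<mu> "max (\<alpha> - \<mu>) \<alpha>"] Q_nonneg[of "max (\<alpha> - \<mu>) \<alpha> + 1"] by simp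
  ultimately show ?thesis
    by (simp add: algebra_simps)
qed

section \<open>The gain of thresholding over the zero estimate\<close>

definition threshold_gain :: "real \<Rightarrow> real \<Rightarrow> real" where
  "threshold_gain \<mu> \<alpha> = \<mu>\<^sup>2 - point_risk 1 \<alpha> \<mu>"

lemma threshold_gain_abs: "threshold_gain \<bar>\<mu>\<bar> \<alpha> = threshold_gain \<mu> \<alpha>"
  by (cases "\<mu> \<ge> 0") (auto simp: threshold_gain_def point_risk_1_minus)

lemma threshold_gain_deriv:
  "((\<lambda>m. threshold_gain m \<alpha>) has_real_derivative 2 * \<mu> * (Q (\<alpha> + \<mu>) + Q (\<alpha> - \<mu>))) (at \<mu>)"
proof -
  have "((\<lambda>m. threshold_gain m \<alpha>) has_real_derivative 2 * \<mu> - 2 * \<mu> * (Q (-\<alpha> - \<mu>) - Q (\<alpha> - \<mu>))) (at \<mu>)"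
    unfolding threshold_gain_def
    by (rule DERIV_diff[OF _ point_risk_1_deriv]) (auto intro!: derivative_eq_intros)
  moreover have "Q (-\<alpha> - \<mu>) = 1 - Q (\<alpha> + \<mu>)"
    using Q_minus[of "\<alpha> + \<mu>"] by simp
  ultimately show ?thesis
    by (simp add: algebra_simps)
qed

lemma threshold_gain_mono: "0 \<le> x \<Longrightarrow> x \<le> y \<Longrightarrow> threshold_gain x \<alpha> \<le> threshold_gain y \<alpha>"
  by (rule DERIV_nonneg_imp_nondecreasing[of x y])
     (auto intro!: exI threshold_gain_deriv simp: add_nonneg_nonneg Q_nonneg)

lemma threshold_gain_0: "threshold_gain 0 \<alpha> = - 2 * tail_quad 1 (-\<alpha>) \<alpha>"
  using tail_quad_minus[of \<alpha> \<alpha>] unfolding threshold_gain_def point_risk_1_eq by simp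

lemma Q_diff_ge:
  assumes "\<mu> > 0" "\<alpha> \<ge> \<mu>"
  shows "\<mu> / 2 * phi \<alpha> \<le> Q (\<alpha> - \<mu> / 2)"
proof -
  obtain z where z: "\<alpha> - \<mu> / 2 < z" "z < \<alpha>"
    and eq: "Q \<alpha> - Q (\<alpha> - \<mu> / 2) = (\<alpha> - (\<alpha> - \<mu> / 2)) * (- phi z)"
    using MVT2[of "\<alpha> - \<mu> / 2" \<alpha> Q "\<lambda>x. - phi x"] Q_deriv assms(1) by force
  have "\<mu> * phi \<alpha> \<le> \<mu> * phi z"
    using z assms by (intro mult_left_mono phi_antimono) auto
  then show ?thesis
    using eq Q_nonneg[of \<alpha>] by simp
qed

lemma threshold_gain_ge:
  assumes "\<mu> > 0" "\<alpha> \<ge> \<mu>"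
  shows "threshold_gain 0 \<alpha> + \<mu> ^ 3 * phi \<alpha> / 4 \<le> threshold_gain \<mu> \<alpha>"
proof -
  obtain z where z: "\<mu> / 2 < z" "z < \<mu>" and eq:
    "threshold_gain \<mu> \<alpha> - threshold_gain (\<mu> / 2) \<alpha> = (\<mu> - \<mu> / 2) * (2 * z * (Q (\<alpha> + z) + Q (\<alpha> - z)))"
    using MVT2[of "\<mu> / 2" \<mu> "\<lambda>m. threshold_gain m \<alpha>" "\<lambda>m. 2 * m * (Q (\<alpha> + m) + Q (\<alpha> - m))"]
      threshold_gain_deriv assms(1) by force
  have "\<mu> / 2 * phi \<alpha> \<le> Q (\<alpha> - z)"
    using Q_diff_ge[OF assms] Q_antimono[of "\<alpha> - z" "\<alpha> - \<mu> / 2"] z by simp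
  then have "\<mu> / 2 * phi \<alpha> \<le> Q (\<alpha> + z) + Q (\<alpha> - z)"
    using Q_nonneg[of "\<alpha> + z"] by linarith
  then have "\<mu> * (\<mu> / 2 * phi \<alpha>) \<le> 2 * z * (Q (\<alpha> + z) + Q (\<alpha> - z))"
    using z assms(1) phi_pos[of \<alpha>] by (intro mult_mono) auto
  then have "(\<mu> - \<mu> / 2) * (\<mu> * (\<mu> / 2 * phi \<alpha>))
               \<le> (\<mu> - \<mu> / 2) * (2 * z * (Q (\<alpha> + z) + Q (\<alpha> - z)))"
    using assms(1) by (intro mult_left_mono) auto
  then have "\<mu> ^ 3 * phi \<alpha> / 4 \<le> threshold_gain \<mu> \<alpha> - threshold_gain (\<mu> / 2) \<alpha>"
    unfolding eq by (simp add: power3_eq_cube field_simps)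
  moreover have "threshold_gain 0 \<alpha> \<le> threshold_gain (\<mu> / 2) \<alpha>"
    using assms(1) by (intro threshold_gain_mono) auto
  ultimately show ?thesis by simp
qed

lemma point_risk_ray_le:
  assumes "\<sigma> > 0" "\<mu> > 0" "\<alpha> \<ge> \<mu>"
  shows "point_risk \<sigma> (\<alpha> * \<sigma>) b \<le> b\<^sup>2 + 2 * \<sigma>\<^sup>2 * tail_quad 1 (-\<alpha>) \<alpha>
                                      - \<sigma>\<^sup>2 * (\<mu> ^ 3 * phi \<alpha> / 4) * indicator {b. \<sigma> * \<mu> \<le> \<bar>b\<bar>} b"
proof -
  have "point_risk \<sigma> (\<alpha> * \<sigma>) b = b\<^sup>2 - \<sigma>\<^sup>2 * threshold_gain (b / \<sigma>) \<alpha>"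
    using assms(1) unfolding point_risk_scale[OF assms(1)] threshold_gain_def
    by (simp add: power_divide algebra_simps)
  then have risk_eq: "point_risk \<sigma> (\<alpha> * \<sigma>) b = b\<^sup>2 - \<sigma>\<^sup>2 * threshold_gain \<bar>b / \<sigma>\<bar> \<alpha>"
    by (simp only: threshold_gain_abs)
  show ?thesis
  proof (cases "\<sigma> * \<mu> \<le> \<bar>b\<bar>")
    case True
    then have "\<mu> \<le> \<bar>b / \<sigma>\<bar>"
      using assms(1) by (simp add: abs_div pos_le_divide_eq mult.commute)
    then have "threshold_gain \<mu> \<alpha> \<le> threshold_gain \<bar>b / \<sigma>\<bar> \<alpha>"
      using assms(2) by (intro threshold_gain_mono) auto
    then have "threshold_gain 0 \<alpha> + \<mu> ^ 3 * phi \<alpha> / 4 \<le> threshold_gain \<bar>b / \<sigma>\<bar> \<alpha>"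
      using threshold_gain_ge[OF assms(2,3)] by linarith
    then have "\<sigma>\<^sup>2 * (threshold_gain 0 \<alpha> + \<mu> ^ 3 * phi \<alpha> / 4) \<le> \<sigma>\<^sup>2 * threshold_gain \<bar>b / \<sigma>\<bar> \<alpha>"
      by (intro mult_left_mono) auto
    then show ?thesis
      unfolding risk_eq threshold_gain_0 using True by (simp add: algebra_simps)
  next
    case False
    have "\<sigma>\<^sup>2 * threshold_gain 0 \<alpha> \<le> \<sigma>\<^sup>2 * threshold_gain \<bar>b / \<sigma>\<bar> \<alpha>"
      by (intro mult_left_mono threshold_gain_mono) auto
    then show ?thesis
      unfolding risk_eq threshold_gain_0 using False by (simp add: algebra_simps)
  qed
qed

lemma exists_threshold_tail_quad_small:
  assumes "\<mu> > 0" "\<pi> > 0"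
  obtains \<alpha> where "\<alpha> \<ge> \<mu>" "2 * tail_quad 1 (-\<alpha>) \<alpha> < \<mu> ^ 3 * phi \<alpha> / 4 * \<pi>"
proof -
  define \<alpha> where "\<alpha> = max \<mu> (max 1 (16 / (\<mu> ^ 3 * \<pi>)))"
  have \<alpha>: "\<alpha> \<ge> \<mu>" "\<alpha> \<ge> 1" "\<alpha> \<ge> 16 / (\<mu> ^ 3 * \<pi>)"
    by (auto simp: \<alpha>_def)
  have "16 \<le> \<alpha> * (\<mu> ^ 3 * \<pi>)"
    using \<alpha>(3) assms by (simp add: divide_le_eq)
  also have "\<dots> \<le> \<alpha> ^ 3 * (\<mu> ^ 3 * \<pi>)"
    using power_increasing[of 1 3 \<alpha>] \<alpha>(2) assms by (intro mult_right_mono) auto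
  finally have "16 \<le> \<alpha> ^ 3 * (\<mu> ^ 3 * \<pi>)" .
  then have "4 * phi \<alpha> / \<alpha> ^ 3 \<le> \<mu> ^ 3 * phi \<alpha> / 4 * \<pi>"
    using \<alpha>(2) phi_pos[of \<alpha>] mult_left_mono[of 16 "\<alpha> ^ 3 * (\<mu> ^ 3 * \<pi>)" "phi \<alpha>"]
    by (simp add: field_simps)
  moreover have "2 * tail_quad 1 (-\<alpha>) \<alpha> < 4 * phi \<alpha> / \<alpha> ^ 3"
    using tail_quad_diag_less[of \<alpha>] \<alpha>(2) by simp
  ultimately show ?thesis
    using that \<alpha>(1) by fastforce
qed

section \<open>Averaging over the signal distribution\<close>

locale signal_distribution = prob_space p for p :: "real measure" +
  assumes sets_eq_borel: "sets p = sets borel"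
    and integrable_sq: "integrable p (\<lambda>b. b\<^sup>2)"
begin

lemma integrable_point_risk:
  assumes "\<sigma> > 0" "\<tau> \<ge> 0"
  shows "integrable p (point_risk \<sigma> \<tau>)"
proof (rule Bochner_Integration.integrable_bound)
  show "integrable p (\<lambda>b. b\<^sup>2 + \<sigma>\<^sup>2)"
    using integrable_sq by auto
  show "point_risk \<sigma> \<tau> \<in> borel_measurable p"
    using sets_eq_borel by measurable
  show "AE b in p. norm (point_risk \<sigma> \<tau> b) \<le> norm (b\<^sup>2 + \<sigma>\<^sup>2)"
    using point_risk_nonneg[OF assms] point_risk_le[OF assms] by auto
qed

lemma risk_eq_integral_point_risk:
  assumes "\<sigma> > 0" "\<tau> \<ge> 0"
  shows "risk p \<sigma> \<tau> = (\<integral>b. point_risk \<sigma> \<tau> b \<partial>p)"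
proof -
  interpret N: prob_space std_normal by (rule prob_space_std_normal)
  interpret pair_prob_space p std_normal ..
  let ?H = "\<lambda>bw. (soft_thresh (fst bw + \<sigma> * snd bw) \<tau> - fst bw)\<^sup>2"
  have "sets (p \<Otimes>\<^sub>M std_normal) = sets (borel \<Otimes>\<^sub>M borel)"
    by (rule sets_pair_measure_cong[OF sets_eq_borel sets_std_normal])
  moreover have "?H \<in> borel_measurable (borel \<Otimes>\<^sub>M borel)"
    by measurable
  ultimately have "?H \<in> borel_measurable (p \<Otimes>\<^sub>M std_normal)"
    using measurable_cong_sets by blast
  then have "integrable (p \<Otimes>\<^sub>M std_normal) ?H"
    using integrable_point_risk[OF assms] integrable_std_normal_soft_thresh_err[OF assms(2)]
    by (intro Fubini_integrable) (simp_all add: integral_std_normal_soft_thresh_err[OF assms])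
  then have "risk p \<sigma> \<tau> = (\<integral>b. (\<integral>w. ?H (b, w) \<partial>std_normal) \<partial>p)"
    unfolding risk_def by (rule integral_fst'[symmetric])
  then show ?thesis
    by (simp add: integral_std_normal_soft_thresh_err[OF assms])
qed

lemma risk_nonneg: "\<sigma> > 0 \<Longrightarrow> \<tau> \<ge> 0 \<Longrightarrow> risk p \<sigma> \<tau> \<ge> 0"
  by (simp add: risk_eq_integral_point_risk point_risk_nonneg)

lemma bdd_below_risk: "\<sigma> > 0 \<Longrightarrow> bdd_below ((\<lambda>\<tau>. risk p \<sigma> \<tau>) ` {0..})"
  using risk_nonneg by (intro bdd_belowI[where m = 0]) auto

lemma exists_measure_abs_ge_pos:
  assumes "measure p {b. b \<noteq> 0} \<noteq> 0"
  obtains c where "c > 0" "measure p {b. c \<le> \<bar>b\<bar>} > 0"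
proof -
  define A where "A i = {b. inverse (real (Suc i)) \<le> \<bar>b\<bar>}" for i
  have "(\<Union>i. A i) = {b. b \<noteq> 0}"
  proof (intro set_eqI iffI)
    fix x :: real assume "x \<in> {b. b \<noteq> 0}"
    then obtain n where "n > 0" "inverse (real n) < \<bar>x\<bar>"
      using ex_inverse_of_nat_less[of "\<bar>x\<bar>"] by auto
    then have "x \<in> A (n - 1)"
      by (simp add: A_def)
    then show "x \<in> (\<Union>i. A i)" by blast
  qed (auto simp: A_def)
  then have "emeasure p (\<Union>i. A i) \<noteq> 0"
    using assms by (auto simp: measure_def)
  moreover have "A i \<in> sets p" for i
    unfolding A_def sets_eq_borel by measurable
  ultimately obtain i where "emeasure p (A i) \<noteq> 0"
    using emeasure_UN_eq_0[of p A] by blast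
  then show ?thesis
    using that[of "inverse (real (Suc i))"] by (simp add: A_def emeasure_eq_measure zero_less_measure_iff)
qed

lemma tendsto_risk_lower_bound:
  assumes "\<sigma> > 0"
  shows "((\<lambda>t. \<integral>b. b\<^sup>2 * (1 - Q ((t - b) / \<sigma>) - Q ((t + b) / \<sigma>)) \<partial>p) \<longlongrightarrow> (\<integral>b. b\<^sup>2 \<partial>p)) at_top"
proof (rule integral_dominated_convergence_at_top[where w = "\<lambda>b. b\<^sup>2"])
  show "(\<lambda>b. b\<^sup>2 * (1 - Q ((t - b) / \<sigma>) - Q ((t + b) / \<sigma>))) \<in> borel_measurable p" for t
    using sets_eq_borel by measurable
  show "AE b in p. ((\<lambda>t. b\<^sup>2 * (1 - Q ((t - b) / \<sigma>) - Q ((t + b) / \<sigma>))) \<longlongrightarrow> b\<^sup>2) at_top"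
  proof (rule AE_I2)
    fix b :: real
    have "filterlim (\<lambda>t. (t - b) / \<sigma>) at_top at_top" "filterlim (\<lambda>t. (t + b) / \<sigma>) at_top at_top"
      using assms by real_asymp+
    then have "((\<lambda>t. b\<^sup>2 * (1 - Q ((t - b) / \<sigma>) - Q ((t + b) / \<sigma>))) \<longlongrightarrow> b\<^sup>2 * (1 - 0 - 0)) at_top"
      by (intro tendsto_intros filterlim_compose[OF Q_tendsto_0])
    then show "((\<lambda>t. b\<^sup>2 * (1 - Q ((t - b) / \<sigma>) - Q ((t + b) / \<sigma>))) \<longlongrightarrow> b\<^sup>2) at_top"
      by simp
  qed
  show "\<forall>\<^sub>F t in at_top. AE b in p. norm (b\<^sup>2 * (1 - Q ((t - b) / \<sigma>) - Q ((t + b) / \<sigma>))) \<le> b\<^sup>2"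
    using abs_1_minus_Q_minus_Q_le by (intro always_eventually allI AE_I2) (simp add: abs_mult mult_left_le)
qed (use integrable_sq sets_eq_borel in measurable)

lemma risk_less_second_moment:
  assumes "\<sigma> > 0" "c > 0" "measure p {b. c \<le> \<bar>b\<bar>} > 0"
  obtains \<tau> where "\<tau> \<ge> 0" "risk p \<sigma> \<tau> < (\<integral>b. b\<^sup>2 \<partial>p)"
proof -
  define \<mu> where "\<mu> = c / \<sigma>"
  define A where "A = {b. \<sigma> * \<mu> \<le> \<bar>b\<bar>}"
  have \<mu>: "\<mu> > 0"
    using assms by (simp add: \<mu>_def)
  have A: "A = {b. c \<le> \<bar>b\<bar>}" "A \<in> sets p"
    using assms(1) unfolding A_def \<mu>_def sets_eq_borel by auto
  obtain \<alpha> where \<alpha>: "\<alpha> \<ge> \<mu>" "2 * tail_quad 1 (-\<alpha>) \<alpha> < \<mu> ^ 3 * phi \<alpha> / 4 * measure p A"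
    using exists_threshold_tail_quad_small[OF \<mu>, of "measure p A"] assms(3) A(1) by auto
  define D where "D = \<mu> ^ 3 * phi \<alpha> / 4"
  have \<tau>: "\<alpha> * \<sigma> \<ge> 0"
    using \<mu> \<alpha>(1) assms(1) by simp
  have integrable_bound: "integrable p (\<lambda>b. b\<^sup>2 + 2 * \<sigma>\<^sup>2 * tail_quad 1 (-\<alpha>) \<alpha> - \<sigma>\<^sup>2 * D * indicator A b)"
    using integrable_sq A(2) by (auto simp: emeasure_eq_measure)
  have "risk p \<sigma> (\<alpha> * \<sigma>) = (\<integral>b. point_risk \<sigma> (\<alpha> * \<sigma>) b \<partial>p)"
    by (rule risk_eq_integral_point_risk[OF assms(1) \<tau>])
  also have "\<dots> \<le> (\<integral>b. b\<^sup>2 + 2 * \<sigma>\<^sup>2 * tail_quad 1 (-\<alpha>) \<alpha> - \<sigma>\<^sup>2 * D * indicator A b \<partial>p)"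
    using point_risk_ray_le[OF assms(1) \<mu> \<alpha>(1)] unfolding A_def D_def
    by (intro integral_mono integrable_point_risk[OF assms(1) \<tau>] integrable_bound[unfolded A_def D_def])
  also have "\<dots> = (\<integral>b. b\<^sup>2 \<partial>p) + \<sigma>\<^sup>2 * (2 * tail_quad 1 (-\<alpha>) \<alpha> - D * measure p A)"
    using integrable_sq A(2) by (simp add: emeasure_eq_measure prob_space algebra_simps)
  also have "\<dots> < (\<integral>b. b\<^sup>2 \<partial>p)"
    using \<alpha>(2) assms(1) by (simp add: D_def mult_pos_neg)
  finally show ?thesis
    using that \<tau> by blast
qed

text \<open>The risk tends to the second moment as \<open>\<tau> \<rightarrow> \<infinity>\<close>, while some threshold does strictly better.\<close>

lemma risk_beaten_beyond_bound:
  assumes "\<sigma> > 0" "measure p {b. b \<noteq> 0} \<noteq> 0"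
  obtains \<tau>\<^sub>0 T where "0 \<le> \<tau>\<^sub>0" "\<tau>\<^sub>0 \<le> T" "\<And>\<tau>. T < \<tau> \<Longrightarrow> risk p \<sigma> \<tau>\<^sub>0 < risk p \<sigma> \<tau>"
proof -
  obtain c where "c > 0" "measure p {b. c \<le> \<bar>b\<bar>} > 0"
    using exists_measure_abs_ge_pos[OF assms(2)] .
  then obtain \<tau>\<^sub>0 where \<tau>\<^sub>0: "\<tau>\<^sub>0 \<ge> 0" "risk p \<sigma> \<tau>\<^sub>0 < (\<integral>b. b\<^sup>2 \<partial>p)"
    using risk_less_second_moment[OF assms(1)] by blast
  let ?L = "\<lambda>t. \<integral>b. b\<^sup>2 * (1 - Q ((t - b) / \<sigma>) - Q ((t + b) / \<sigma>)) \<partial>p"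
  obtain N where N: "\<And>t. t \<ge> N \<Longrightarrow> risk p \<sigma> \<tau>\<^sub>0 < ?L t"
    using order_tendstoD(1)[OF tendsto_risk_lower_bound[OF assms(1)] \<tau>\<^sub>0(2)]
    by (auto simp: eventually_at_top_linorder)
  have "risk p \<sigma> \<tau>\<^sub>0 < risk p \<sigma> \<tau>" if "max N \<tau>\<^sub>0 < \<tau>" for \<tau>
  proof -
    have \<tau>: "\<tau> \<ge> 0"
      using that \<tau>\<^sub>0(1) by simp
    have "integrable p (\<lambda>b. b\<^sup>2 * (1 - Q ((\<tau> - b) / \<sigma>) - Q ((\<tau> + b) / \<sigma>)))"
    proof (rule Bochner_Integration.integrable_bound[OF integrable_sq])
      show "(\<lambda>b. b\<^sup>2 * (1 - Q ((\<tau> - b) / \<sigma>) - Q ((\<tau> + b) / \<sigma>))) \<in> borel_measurable p"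
        using sets_eq_borel by measurable
      show "AE b in p. norm (b\<^sup>2 * (1 - Q ((\<tau> - b) / \<sigma>) - Q ((\<tau> + b) / \<sigma>))) \<le> norm (b\<^sup>2)"
        using abs_1_minus_Q_minus_Q_le by (intro AE_I2) (simp add: abs_mult mult_left_le)
    qed
    then have "?L \<tau> \<le> (\<integral>b. point_risk \<sigma> \<tau> b \<partial>p)"
      using point_risk_ge[OF assms(1) \<tau>] by (intro integral_mono integrable_point_risk[OF assms(1) \<tau>])
    then show ?thesis
      using N[of \<tau>] that risk_eq_integral_point_risk[OF assms(1) \<tau>] by simp
  qed
  then show ?thesis
    using that[of \<tau>\<^sub>0 "max N \<tau>\<^sub>0"] \<tau>\<^sub>0(1) by simp
qed

lemma integrable_Q_comp:
  assumes "f \<in> borel_measurable borel"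
  shows "integrable p (\<lambda>b. Q (f b))"
proof (rule Bochner_Integration.integrable_bound[OF integrable_const[of "1::real"]])
  show "(\<lambda>b. Q (f b)) \<in> borel_measurable p"
    using assms sets_eq_borel by measurable
  show "AE b in p. norm (Q (f b)) \<le> norm (1::real)"
    using Q_nonneg Q_le_1 by (intro AE_I2) simp
qed

lemma integral_Q_comp_pos:
  assumes "f \<in> borel_measurable borel"
  shows "0 < (\<integral>b. Q (f b) \<partial>p)"
proof -
  have "(\<integral>b. 0 \<partial>p) < (\<integral>b. Q (f b) \<partial>p)"
    by (rule integral_less_AE_space) (use assms integrable_Q_comp Q_pos emeasure_space_1 in auto)
  then show ?thesis by simp
qed

lemma risk_ray_gap:
  assumes "0 < \<sigma>\<^sub>1" "\<sigma>\<^sub>1 < \<sigma>\<^sub>2" "0 \<le> \<alpha>" "\<alpha> \<le> A"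
  shows "risk p \<sigma>\<^sub>1 (\<alpha> * \<sigma>\<^sub>1) + 2 * \<sigma>\<^sub>1 * (\<sigma>\<^sub>2 - \<sigma>\<^sub>1) * (\<integral>b. Q (A + \<bar>b\<bar> / \<sigma>\<^sub>1 + 1) \<partial>p)
           \<le> risk p \<sigma>\<^sub>2 (\<alpha> * \<sigma>\<^sub>2)"
proof -
  have \<tau>: "0 \<le> \<alpha> * \<sigma>\<^sub>1" "0 < \<sigma>\<^sub>2" "0 \<le> \<alpha> * \<sigma>\<^sub>2"
    using assms by simp_all
  have Q: "integrable p (\<lambda>b. Q (A + \<bar>b\<bar> / \<sigma>\<^sub>1 + 1))"
    by (rule integrable_Q_comp) measurable
  have "risk p \<sigma>\<^sub>1 (\<alpha> * \<sigma>\<^sub>1) + 2 * \<sigma>\<^sub>1 * (\<sigma>\<^sub>2 - \<sigma>\<^sub>1) * (\<integral>b. Q (A + \<bar>b\<bar> / \<sigma>\<^sub>1 + 1) \<partial>p)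
        = (\<integral>b. point_risk \<sigma>\<^sub>1 (\<alpha> * \<sigma>\<^sub>1) b + 2 * \<sigma>\<^sub>1 * (\<sigma>\<^sub>2 - \<sigma>\<^sub>1) * Q (A + \<bar>b\<bar> / \<sigma>\<^sub>1 + 1) \<partial>p)"
    using integrable_point_risk[OF assms(1) \<tau>(1)] Q
    by (simp add: risk_eq_integral_point_risk[OF assms(1) \<tau>(1)])
  also have "\<dots> \<le> (\<integral>b. point_risk \<sigma>\<^sub>2 (\<alpha> * \<sigma>\<^sub>2) b \<partial>p)"
    using point_risk_ray_gap[OF assms(1,2,4)] integrable_point_risk[OF assms(1) \<tau>(1)] Q
    by (intro integral_mono integrable_point_risk[OF \<tau>(2,3)]) (auto simp: algebra_simps)
  also have "\<dots> = risk p \<sigma>\<^sub>2 (\<alpha> * \<sigma>\<^sub>2)"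
    by (rule risk_eq_integral_point_risk[OF \<tau>(2,3), symmetric])
  finally show ?thesis .
qed

lemma INF_risk_gap_bounded_thresholds:
  fixes T :: real
  assumes "0 < \<sigma>\<^sub>1" "\<sigma>\<^sub>1 < \<sigma>\<^sub>2"
  obtains \<delta> where "\<delta> > 0"
    "\<And>\<tau>. 0 \<le> \<tau> \<Longrightarrow> \<tau> \<le> T \<Longrightarrow> (INF \<tau>\<in>{0..}. risk p \<sigma>\<^sub>1 \<tau>) + \<delta> \<le> risk p \<sigma>\<^sub>2 \<tau>"
proof
  define A where "A = T / \<sigma>\<^sub>2"
  show "0 < 2 * \<sigma>\<^sub>1 * (\<sigma>\<^sub>2 - \<sigma>\<^sub>1) * (\<integral>b. Q (A + \<bar>b\<bar> / \<sigma>\<^sub>1 + 1) \<partial>p)"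
    using assms integral_Q_comp_pos[of "\<lambda>b. A + \<bar>b\<bar> / \<sigma>\<^sub>1 + 1"] by simp
  fix \<tau> assume \<tau>: "0 \<le> \<tau>" "\<tau> \<le> T"
  define \<alpha> where "\<alpha> = \<tau> / \<sigma>\<^sub>2"
  have \<alpha>: "0 \<le> \<alpha>" "\<alpha> \<le> A" "\<alpha> * \<sigma>\<^sub>2 = \<tau>"
    using \<tau> assms by (simp_all add: \<alpha>_def A_def divide_right_mono)
  have "(INF \<tau>\<in>{0..}. risk p \<sigma>\<^sub>1 \<tau>) \<le> risk p \<sigma>\<^sub>1 (\<alpha> * \<sigma>\<^sub>1)"
    using \<alpha>(1) assms(1) by (intro cINF_lower bdd_below_risk assms(1)) simp
  then show "(INF \<tau>\<in>{0..}. risk p \<sigma>\<^sub>1 \<tau>) + 2 * \<sigma>\<^sub>1 * (\<sigma>\<^sub>2 - \<sigma>\<^sub>1) * (\<integral>b. Q (A + \<bar>b\<bar> / \<sigma>\<^sub>1 + 1) \<partial>p)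
               \<le> risk p \<sigma>\<^sub>2 \<tau>"
    using risk_ray_gap[OF assms \<alpha>(1,2)] \<alpha>(3) by simp
qed

end

theorem lemma11:
  fixes p :: "real measure"
  assumes "prob_space p"
    and "sets p = sets borel"
    and "integrable p (\<lambda>b. b\<^sup>2)"
    and "prob_space.prob p {b. b \<noteq> 0} \<noteq> 0"
  shows "strict_mono_on {0<..} (\<lambda>\<sigma>. INF \<tau>\<in>{0..}. risk p \<sigma> \<tau>)"
proof (rule strict_mono_onI)
  interpret signal_distribution p
    using assms(1-3) by (simp add: signal_distribution_def signal_distribution_axioms_def)
  fix \<sigma>\<^sub>1 \<sigma>\<^sub>2 :: real
  assume "\<sigma>\<^sub>1 \<in> {0<..}" "\<sigma>\<^sub>2 \<in> {0<..}" "\<sigma>\<^sub>1 < \<sigma>\<^sub>2"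
  then have \<sigma>: "0 < \<sigma>\<^sub>1" "\<sigma>\<^sub>1 < \<sigma>\<^sub>2" "0 < \<sigma>\<^sub>2" by auto
  let ?I\<^sub>1 = "INF \<tau>\<in>{0..}. risk p \<sigma>\<^sub>1 \<tau>"
  obtain \<tau>\<^sub>0 T where \<tau>\<^sub>0: "0 \<le> \<tau>\<^sub>0" "\<tau>\<^sub>0 \<le> T" and beaten: "\<And>\<tau>. T < \<tau> \<Longrightarrow> risk p \<sigma>\<^sub>2 \<tau>\<^sub>0 < risk p \<sigma>\<^sub>2 \<tau>"
    by (rule risk_beaten_beyond_bound[OF \<sigma>(3) assms(4)]) blast
  obtain \<delta> where \<delta>: "\<delta> > 0" and gap: "\<And>\<tau>. 0 \<le> \<tau> \<Longrightarrow> \<tau> \<le> T \<Longrightarrow> ?I\<^sub>1 + \<delta> \<le> risk p \<sigma>\<^sub>2 \<tau>"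
    by (rule INF_risk_gap_bounded_thresholds[OF \<sigma>(1,2), where T = T]) blast
  have "?I\<^sub>1 + \<delta> \<le> risk p \<sigma>\<^sub>2 \<tau>" if "\<tau> \<in> {0..}" for \<tau>
  proof (cases "\<tau> \<le> T")
    case False
    then show ?thesis
      using gap[OF \<tau>\<^sub>0] beaten[of \<tau>] by simp
  qed (use gap that in simp)
  then have "?I\<^sub>1 + \<delta> \<le> (INF \<tau>\<in>{0..}. risk p \<sigma>\<^sub>2 \<tau>)"
    by (intro cINF_greatest) auto
  then show "?I\<^sub>1 < (INF \<tau>\<in>{0..}. risk p \<sigma>\<^sub>2 \<tau>)"
    using \<delta> by simp
qed

end
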